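(* Let $a\ge0$ be real, let $A:=\frac{a+i}{a-i}$, and suppose $A$ is not a root of unity and $\liminf_{m\to\infty}|A^m-1|^{1/m}=0$. Let $0<R<\infty$. Then there exists $f\in A(B_R)$ such that the unique formal power series solution $u$ of the Goursat problem $\Delta u=f$, $y(x-ay)\mid u$ (i.e. $u=y(x-ay)q$ for a formal power series $q$) does not converge in any neighborhood of the origin. Specifically, one can take $f=\sum_{m\ge0}R^{-m}\bar z^m$ with $\bar z=x-iy$.
   Context: $\Delta$ is the Laplace operator on $\mathbb R^2$. $B_R=\{(x,y): x^2+y^2<R^2\}$ and $A(B_R)$ denotes the algebra of all $C^\infty$ functions $f:B_R\to\mathbb C$ such that for every compact $K\subset B_R$ the homogeneous Taylor series $\sum_m f_m$ of $f$ at $0$ converges absolutely and uniformly to $f$ on $K$. When $A$ is not a root of unity, the formal problem has a unique formal power series solution. *)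

theory Defs
  imports "HOL-Analysis.Analysis"
begin

text \<open>Points of R^2 are pairs (x,y) :: real \<times> real (the product metric is Euclidean).\<close>

definition pdx :: "(real \<times> real \<Rightarrow> complex) \<Rightarrow> real \<times> real \<Rightarrow> complex" where
  "pdx g p = vector_derivative (\<lambda>t. g (t, snd p)) (at (fst p))"

definition pdy :: "(real \<times> real \<Rightarrow> complex) \<Rightarrow> real \<times> real \<Rightarrow> complex" where
  "pdy g p = vector_derivative (\<lambda>t. g (fst p, t)) (at (snd p))"

inductive_set partials :: "(real \<times> real \<Rightarrow> complex) \<Rightarrow> (real \<times> real \<Rightarrow> complex) set"
  for f where
  base: "f \<in> partials f"
| dx: "g \<in> partials f \<Longrightarrow> pdx g \<in> partials f"
| dy: "g \<in> partials f \<Longrightarrow> pdy g \<in> partials f"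

definition smooth_on :: "(real \<times> real) set \<Rightarrow> (real \<times> real \<Rightarrow> complex) \<Rightarrow> bool" where
  "smooth_on S f \<longleftrightarrow> (\<forall>g\<in>partials f. g differentiable_on S)"

definition taylor_coeff :: "(real \<times> real \<Rightarrow> complex) \<Rightarrow> nat \<Rightarrow> nat \<Rightarrow> complex" where
  "taylor_coeff f i j = ((pdx ^^ i) ((pdy ^^ j) f)) (0, 0) / (fact i * fact j)"

definition taylor_hom :: "(real \<times> real \<Rightarrow> complex) \<Rightarrow> nat \<Rightarrow> real \<times> real \<Rightarrow> complex" where
  "taylor_hom f m p = (\<Sum>i\<le>m. taylor_coeff f i (m - i) * of_real (fst p) ^ i * of_real (snd p) ^ (m - i))"

definition algA :: "real \<Rightarrow> (real \<times> real \<Rightarrow> complex) set" where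
  "algA R = {f. smooth_on (ball (0,0) R) f \<and>
     (\<forall>K. compact K \<and> K \<subseteq> ball (0,0) R \<longrightarrow>
        uniformly_convergent_on K (\<lambda>n p. \<Sum>m<n. norm (taylor_hom f m p)) \<and>
        uniform_limit K (\<lambda>n p. \<Sum>m<n. taylor_hom f m p) f sequentially)}"

text \<open>Formal power series in x,y: coefficient functions c i j of x^i y^j.\<close>
definition fps_lap :: "(nat \<Rightarrow> nat \<Rightarrow> complex) \<Rightarrow> nat \<Rightarrow> nat \<Rightarrow> complex" where
  "fps_lap u i j = of_nat ((i+2)*(i+1)) * u (i+2) j + of_nat ((j+2)*(j+1)) * u i (j+2)"

text \<open>Coefficients of y (x - a y) q.\<close>
definition mult_goursat :: "real \<Rightarrow> (nat \<Rightarrow> nat \<Rightarrow> complex) \<Rightarrow> nat \<Rightarrow> nat \<Rightarrow> complex" where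
  "mult_goursat a q i j =
     (if 1 \<le> i \<and> 1 \<le> j then q (i - 1) (j - 1) else 0)
     - of_real a * (if 2 \<le> j then q i (j - 2) else 0)"

definition goursat_sol :: "real \<Rightarrow> (real \<times> real \<Rightarrow> complex) \<Rightarrow> (nat \<Rightarrow> nat \<Rightarrow> complex) \<Rightarrow> bool" where
  "goursat_sol a f u \<longleftrightarrow>
     (\<forall>i j. fps_lap u i j = taylor_coeff f i j) \<and>
     (\<exists>q. \<forall>i j. u i j = mult_goursat a q i j)"

definition fps2_converges_near0 :: "(nat \<Rightarrow> nat \<Rightarrow> complex) \<Rightarrow> bool" where
  "fps2_converges_near0 u \<longleftrightarrow> (\<exists>r>0. \<forall>p\<in>ball (0,0) r.
     (\<lambda>(i,j). u i j * of_real (fst p) ^ i * of_real (snd p) ^ j) summable_on UNIV)"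

end

theory Submission
  imports Defs
begin

text \<open>
  Formal power series are handled through their homogeneous parts \<open>u\<^sub>n\<close>, evaluated at complex
  points; divisibility by \<open>y (x - a y)\<close> means \<open>u\<^sub>n(x, 0) = 0\<close> and \<open>u\<^sub>n(a, 1) = 0\<close> for all \<open>n\<close>.
  A harmonic homogeneous polynomial of degree \<open>n > 0\<close> vanishing on \<open>y = 0\<close> is a multiple of
  \<open>z\<^sup>n - zbar\<^sup>n\<close>, whose value at \<open>(a, 1)\<close> is \<open>(a - i)\<^sup>n (A\<^sup>n - 1)\<close>; since \<open>A\<close> is not a root of
  unity, the formal solution is unique. It is explicit, and its part of degree \<open>m + 2\<close> takes the
  value \<open>2\<^bsup>m+2\<^esup> \<alpha>\<^sub>m\<close> with \<open>\<alpha>\<^sub>m = -i / (2 (m + 1) R\<^sup>m (a - i) (A\<^bsup>m+2\<^esup> - 1))\<close> at the isotropic point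
  \<open>(x, y) = (1, -i)\<close>, where \<open>z = 2\<close> and \<open>zbar = 0\<close>. Convergence near the origin bounds the
  homogeneous parts geometrically on a small bidisc, which gives \<open>|A\<^sup>n - 1| \<ge> C q\<^sup>n\<close> with
  \<open>C, q > 0\<close> and contradicts \<open>liminf |A\<^sup>n - 1|\<^bsup>1/n\<^esup> = 0\<close>.
\<close>

section \<open>Homogeneous parts and divisibility by \<open>y (x - a y)\<close>\<close>

definition homog_eval :: "(nat \<Rightarrow> nat \<Rightarrow> complex) \<Rightarrow> nat \<Rightarrow> complex \<Rightarrow> complex \<Rightarrow> complex" where
  "homog_eval u n x y = (\<Sum>j\<le>n. u (n - j) j * x ^ (n - j) * y ^ j)"

definition times_x :: "(nat \<Rightarrow> nat \<Rightarrow> complex) \<Rightarrow> nat \<Rightarrow> nat \<Rightarrow> complex" where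
  "times_x u i j = (if i = 0 then 0 else u (i - 1) j)"

definition times_y :: "(nat \<Rightarrow> nat \<Rightarrow> complex) \<Rightarrow> nat \<Rightarrow> nat \<Rightarrow> complex" where
  "times_y u i j = (if j = 0 then 0 else u i (j - 1))"

lemma homog_eval_0 [simp]: "homog_eval u 0 x y = u 0 0"
  by (simp add: homog_eval_def)

lemma homog_eval_add:
  "homog_eval (\<lambda>i j. u i j + v i j) n x y = homog_eval u n x y + homog_eval v n x y"
  by (simp add: homog_eval_def sum.distrib distrib_right)

lemma homog_eval_diff:
  "homog_eval (\<lambda>i j. u i j - v i j) n x y = homog_eval u n x y - homog_eval v n x y"
  by (simp add: homog_eval_def sum_subtractf left_diff_distrib)

lemma homog_eval_cmult:
  "homog_eval (\<lambda>i j. c * u i j) n x y = c * homog_eval u n x y"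
  by (simp add: homog_eval_def sum_distrib_left mult.assoc)

lemma homog_eval_scale:
  "homog_eval u n (t * x) (t * y) = t ^ n * homog_eval u n x y"
proof -
  have "t ^ (n - j) * t ^ j = t ^ n" if "j \<le> n" for j
    using that by (simp flip: power_add)
  then show ?thesis
    unfolding homog_eval_def sum_distrib_left
    by (intro sum.cong refl) (simp add: power_mult_distrib algebra_simps)
qed

lemma homog_eval_Suc:
  "homog_eval u (Suc n) x y = x * homog_eval (\<lambda>i. u (Suc i)) n x y + u 0 (Suc n) * y ^ Suc n"
proof -
  have "(\<Sum>j\<le>n. u (Suc n - j) j * x ^ (Suc n - j) * y ^ j) =
      (\<Sum>j\<le>n. x * (u (Suc (n - j)) j * x ^ (n - j) * y ^ j))"
    by (intro sum.cong refl) (simp add: Suc_diff_le)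
  then show ?thesis
    unfolding homog_eval_def sum.atMost_Suc sum_distrib_left by simp
qed

lemma homog_eval_Suc_y:
  "homog_eval u (Suc n) x y = u (Suc n) 0 * x ^ Suc n + y * homog_eval (\<lambda>i j. u i (Suc j)) n x y"
  unfolding homog_eval_def sum.atMost_Suc_shift sum_distrib_left
  by (simp add: algebra_simps)

lemma homog_eval_times_x:
  "homog_eval (times_x u) (Suc n) x y = x * homog_eval u n x y"
proof -
  have "(\<lambda>i. times_x u (Suc i)) = u"
    by (simp add: fun_eq_iff times_x_def)
  then show ?thesis
    by (simp add: homog_eval_Suc times_x_def)
qed

lemma homog_eval_times_y:
  "homog_eval (times_y u) (Suc n) x y = y * homog_eval u n x y"
  by (simp add: homog_eval_Suc_y times_y_def)

lemma mult_goursat_eq_shift: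
  "mult_goursat a q = times_y (\<lambda>i j. times_x q i j - of_real a * times_y q i j)"
  by (auto simp: fun_eq_iff mult_goursat_def times_x_def times_y_def numeral_2_eq_2
      Suc_le_eq diff_Suc split: nat.split)

lemma homog_eval_mult_goursat:
  "homog_eval (mult_goursat a q) (Suc (Suc n)) x y = y * (x - of_real a * y) * homog_eval q n x y"
  unfolding mult_goursat_eq_shift homog_eval_times_y homog_eval_diff homog_eval_cmult
    homog_eval_times_x homog_eval_times_y
  by (simp add: algebra_simps)

lemma homog_eval_mult_goursat_at_line:
  "homog_eval (mult_goursat a q) n (of_real a) 1 = 0"
proof -
  consider "n = 0" | "n = 1" | k where "n = Suc (Suc k)"
    by (metis One_nat_def not0_implies_Suc)
  then show ?thesis
    by cases (simp_all only: homog_eval_mult_goursat, simp_all add: homog_eval_Suc_y mult_goursat_def)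
qed

lemma divide_by_linear_form:
  fixes c :: complex
  assumes vanish: "\<And>n. homog_eval v n c 1 = 0"
  obtains q where "v = (\<lambda>i j. times_x q i j - c * times_y q i j)"
proof
  define q where "q i j = homog_eval (\<lambda>k. v (k + Suc i)) j c 1" for i j
  have q_0: "q i 0 = v (Suc i) 0" for i
    by (simp add: q_def)
  have q_Suc: "q i (Suc j) = c * q (Suc i) j + v (Suc i) (Suc j)" for i j
    by (simp add: q_def homog_eval_Suc)
  have v_0_Suc: "v 0 (Suc j) = - (c * q 0 j)" for j
    using vanish[of "Suc j"] by (simp add: q_def homog_eval_Suc eq_neg_iff_add_eq_0 add.commute)
  have v_0_0: "v 0 0 = 0"
    using vanish[of 0] by simp
  show "v = (\<lambda>i j. times_x q i j - c * times_y q i j)"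
  proof (intro ext)
    fix i j
    show "v i j = times_x q i j - c * times_y q i j"
      by (cases i; cases j) (simp_all add: times_x_def times_y_def q_0 q_Suc v_0_Suc v_0_0)
  qed
qed

lemma goursat_divisible_iff:
  "(\<exists>q. \<forall>i j. u i j = mult_goursat a q i j) \<longleftrightarrow>
     (\<forall>n. u n 0 = 0) \<and> (\<forall>n. homog_eval u n (of_real a) 1 = 0)"
proof
  assume "\<exists>q. \<forall>i j. u i j = mult_goursat a q i j"
  then obtain q where "u = mult_goursat a q" by blast
  then show "(\<forall>n. u n 0 = 0) \<and> (\<forall>n. homog_eval u n (of_real a) 1 = 0)"
    by (simp add: mult_goursat_def homog_eval_mult_goursat_at_line)
next
  assume "(\<forall>n. u n 0 = 0) \<and> (\<forall>n. homog_eval u n (of_real a) 1 = 0)"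
  then have u0: "\<And>n. u n 0 = 0" and line: "\<And>n. homog_eval u n (of_real a) 1 = 0" by auto
  define v where "v = (\<lambda>i j. u i (Suc j))"
  have u_eq: "u = times_y v"
    by (auto simp: fun_eq_iff times_y_def v_def u0 split: nat.split)
  have "homog_eval v n (of_real a) 1 = 0" for n
    using line[of "Suc n"] by (simp add: homog_eval_Suc_y u0 v_def)
  then obtain q where "v = (\<lambda>i j. times_x q i j - of_real a * times_y q i j)"
    by (rule divide_by_linear_form)
  then have "u = mult_goursat a q"
    by (simp add: u_eq mult_goursat_eq_shift)
  then show "\<exists>q. \<forall>i j. u i j = mult_goursat a q i j" by auto
qed

section \<open>Harmonic homogeneous polynomials and uniqueness\<close>

lemma binomial_Suc_Suc_absorb:
  "(n - k) * (n - Suc k) * (n choose k) = Suc (Suc k) * Suc k * (n choose Suc (Suc k))"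
proof -
  have step: "Suc l * (n choose Suc l) = (n - l) * (n choose l)" for l
    by (metis binomial_absorption binomial_absorb_comp)
  have "Suc (Suc k) * Suc k * (n choose Suc (Suc k)) = Suc k * (Suc (Suc k) * (n choose Suc (Suc k)))"
    by (simp only: mult.assoc mult.left_commute)
  also have "\<dots> = (n - Suc k) * (Suc k * (n choose Suc k))"
    by (simp only: step[of "Suc k"] mult.left_commute)
  also have "\<dots> = (n - k) * (n - Suc k) * (n choose k)"
    by (simp only: step[of k] mult.assoc mult.left_commute)
  finally show ?thesis ..
qed

lemma binomial_Suc_Suc_absorb_plus:
  assumes "i + j = m"
  shows "(i + 2) * (i + 1) * (Suc m choose j) =
    (j + 2) * (j + 1) * (Suc m choose (j + 2)) + 2 * Suc m * (m choose j)"
proof -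
  have diff: "Suc m - j = i + 1" "Suc m - Suc j = i"
    using assms by auto
  then have "(i + 1) * i * (Suc m choose j) = (j + 2) * (j + 1) * (Suc m choose (j + 2))"
    using binomial_Suc_Suc_absorb[of "Suc m" j] by (simp only: add_2_eq_Suc' Suc_eq_plus1)
  moreover have "(i + 1) * (Suc m choose j) = Suc m * (m choose j)"
    using binomial_absorb_comp[of "Suc m" j] diff by simp
  ultimately show ?thesis
    by (simp add: algebra_simps)
qed

lemma fps_lap_add:
  "fps_lap (\<lambda>i j. u i j + v i j) i j = fps_lap u i j + fps_lap v i j"
  by (simp add: fps_lap_def algebra_simps)

lemma fps_lap_diff:
  "fps_lap (\<lambda>i j. u i j - v i j) i j = fps_lap u i j - fps_lap v i j"
  by (simp add: fps_lap_def algebra_simps)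

lemma fps_lap_cmult:
  "fps_lap (\<lambda>i j. c * u i j) i j = c * fps_lap u i j"
  by (simp add: fps_lap_def algebra_simps)

definition binom_coeffs :: "complex \<Rightarrow> nat \<Rightarrow> nat \<Rightarrow> nat \<Rightarrow> complex" where
  "binom_coeffs w n i j = (if i + j = n then of_nat (n choose j) * w ^ j else 0)"

lemma homog_eval_binom_coeffs:
  "homog_eval (binom_coeffs w n) n x y = (x + w * y) ^ n"
  unfolding homog_eval_def binom_coeffs_def binomial_ring[of "w * y" x, simplified add.commute]
  by (intro sum.cong refl) (simp add: power_mult_distrib algebra_simps)

lemma fps_lap_binom_coeffs:
  assumes "w\<^sup>2 = -1"
  shows "fps_lap (binom_coeffs w n) i j = 0"
proof (cases "n = i + j + 2")
  case True
  have w_pow: "w ^ (j + 2) = - (w ^ j)"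
    by (simp only: power_add assms) simp
  have "n - j = i + 2" "n - Suc j = i + 1"
    using True by auto
  then have absorb: "(i + 2) * (i + 1) * (n choose j) = (j + 2) * (j + 1) * (n choose (j + 2))"
    using binomial_Suc_Suc_absorb[of n j] by (simp only: add_2_eq_Suc' Suc_eq_plus1)
  have "i + 2 + j = n" "i + (j + 2) = n"
    using True by simp_all
  then have "fps_lap (binom_coeffs w n) i j = of_nat ((i + 2) * (i + 1)) * (of_nat (n choose j) * w ^ j)
      + of_nat ((j + 2) * (j + 1)) * - (of_nat (n choose (j + 2)) * w ^ j)"
    by (simp only: fps_lap_def binom_coeffs_def w_pow simp_thms if_True mult_minus_right)
  also have "\<dots> = (of_nat ((i + 2) * (i + 1) * (n choose j)) -
      of_nat ((j + 2) * (j + 1) * (n choose (j + 2)))) * w ^ j"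
    by (simp only: of_nat_mult) (simp add: algebra_simps)
  finally show ?thesis
    by (simp only: absorb) simp
next
  case False
  then show ?thesis by (auto simp: fps_lap_def binom_coeffs_def)
qed

text \<open>The coefficient identity behind \<open>\<Delta>(x (x + w y)\<^bsup>m+1\<^esup>) = 2 (m + 1) (x + w y)\<^sup>m\<close>.\<close>
lemma fps_lap_times_x_binom_coeffs:
  assumes "w\<^sup>2 = -1"
  shows "fps_lap (times_x (binom_coeffs w (Suc m))) i j = 2 * of_nat (Suc m) * binom_coeffs w m i j"
proof (cases "m = i + j")
  case True
  have w_pow: "w ^ (j + 2) = - (w ^ j)"
    by (simp only: power_add assms) simp
  note absorb = binomial_Suc_Suc_absorb_plus[OF True [symmetric]]
  have "times_x (binom_coeffs w (Suc m)) (i + 2) j = of_nat (Suc m choose j) * w ^ j"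
    using True by (simp add: times_x_def binom_coeffs_def)
  moreover have "times_x (binom_coeffs w (Suc m)) i (j + 2) = - (of_nat (Suc m choose (j + 2)) * w ^ j)"
  proof (cases i)
    case 0
    then have "Suc m choose (j + 2) = 0"
      using True by simp
    then show ?thesis
      using 0 by (simp add: times_x_def del: binomial_Suc_Suc)
  next
    case (Suc i')
    then have "i' + (j + 2) = Suc m"
      using True by simp
    then show ?thesis
      using Suc by (simp only: times_x_def binom_coeffs_def w_pow if_True) simp
  qed
  ultimately have "fps_lap (times_x (binom_coeffs w (Suc m))) i j =
      of_nat ((i + 2) * (i + 1)) * (of_nat (Suc m choose j) * w ^ j)
      + of_nat ((j + 2) * (j + 1)) * - (of_nat (Suc m choose (j + 2)) * w ^ j)"
    by (simp only: fps_lap_def)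
  also have "\<dots> = (of_nat ((i + 2) * (i + 1) * (Suc m choose j)) -
      of_nat ((j + 2) * (j + 1) * (Suc m choose (j + 2)))) * w ^ j"
    by (simp only: of_nat_mult) (simp add: algebra_simps)
  also have "\<dots> = of_nat (2 * Suc m * (m choose j)) * w ^ j"
    by (simp only: absorb of_nat_add add_diff_cancel_left')
  also have "\<dots> = 2 * of_nat (Suc m) * binom_coeffs w m i j"
    using True by (simp add: binom_coeffs_def algebra_simps)
  finally show ?thesis .
next
  case False
  then show ?thesis by (auto simp: fps_lap_def binom_coeffs_def times_x_def)
qed

lemma harmonic_homog_coeffs_eq_0:
  assumes harmonic: "\<And>i j. fps_lap w i j = 0"
    and "w n 0 = 0" "w (n - 1) 1 = 0" "k \<le> n"
  shows "w (n - k) k = 0"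
  using \<open>k \<le> n\<close>
proof (induction k rule: less_induct)
  case (less k)
  consider "k = 0" | "k = 1" | l where "k = l + 2"
    by (metis One_nat_def add_2_eq_Suc' not0_implies_Suc)
  then show ?case
  proof cases
    case 3
    have "n - k + 2 = n - l"
      using less.prems 3 by simp
    moreover have "of_nat ((n - k + 2) * (n - k + 1)) * w (n - k + 2) l +
        of_nat ((l + 2) * (l + 1)) * w (n - k) (l + 2) = 0"
      using harmonic[of "n - k" l] unfolding fps_lap_def .
    moreover have "w (n - l) l = 0"
      using less 3 by simp
    ultimately have "of_nat ((l + 2) * (l + 1)) * w (n - k) k = 0"
      using 3 by simp
    moreover have "of_nat ((l + 2) * (l + 1)) \<noteq> (0 :: complex)"
      by (simp only: of_nat_eq_0_iff) simp
    ultimately show ?thesis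
      by simp
  qed (use assms in simp_all)
qed

lemma harmonic_goursat_kernel:
  fixes c :: complex
  assumes harmonic: "\<And>i j. fps_lap w i j = 0"
    and x_axis: "\<And>n. w n 0 = 0"
    and line: "\<And>n. homog_eval w n c 1 = 0"
    and nonresonant: "\<And>n. n > 0 \<Longrightarrow> (c + \<i>) ^ n \<noteq> (c - \<i>) ^ n"
  shows "w i j = 0"
proof (cases "i + j = 0")
  case True
  then show ?thesis using x_axis by simp
next
  case False
  define n where "n = i + j"
  \<comment> \<open>\<open>z\<^sup>n - zbar\<^sup>n\<close> is harmonic, vanishes on \<open>y = 0\<close> and has coefficient \<open>2 i n\<close> at \<open>x\<^bsup>n-1\<^esup> y\<close>\<close>
  define t where "t = w (n - 1) 1 / (2 * \<i> * of_nat n)"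
  define h where "h = (\<lambda>i j. w i j - t * (binom_coeffs \<i> n i j - binom_coeffs (-\<i>) n i j))"
  have "n > 0" using False by (simp add: n_def)
  have "h (n - k) k = 0" if "k \<le> n" for k
  proof (rule harmonic_homog_coeffs_eq_0[OF _ _ _ that])
    show "fps_lap h i j = 0" for i j
      by (simp add: h_def fps_lap_diff fps_lap_cmult fps_lap_binom_coeffs harmonic power2_eq_square)
    show "h n 0 = 0"
      by (simp add: h_def binom_coeffs_def x_axis)
    show "h (n - 1) 1 = 0"
      using \<open>n > 0\<close> by (simp add: h_def binom_coeffs_def t_def)
  qed
  then have "homog_eval h n c 1 = 0"
    by (simp add: homog_eval_def)
  then have "t * ((c + \<i>) ^ n - (c - \<i>) ^ n) = 0"
    by (simp add: h_def homog_eval_diff homog_eval_cmult homog_eval_binom_coeffs line)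
  then have "w (n - 1) 1 = 0"
    using nonresonant[OF \<open>n > 0\<close>] \<open>n > 0\<close> by (simp add: t_def)
  then have "w (n - j) j = 0"
    by (rule harmonic_homog_coeffs_eq_0[OF harmonic x_axis]) (simp add: n_def)
  then show ?thesis by (simp add: n_def)
qed

lemma goursat_sol_unique:
  assumes nonresonant: "\<And>n. n > 0 \<Longrightarrow> (of_real a + \<i>) ^ n \<noteq> (of_real a - \<i>) ^ n"
    and "goursat_sol a f u" "goursat_sol a f v"
  shows "u = v"
proof -
  define w where "w = (\<lambda>i j. u i j - v i j)"
  have lap_u: "\<And>i j. fps_lap u i j = taylor_coeff f i j"
    and lap_v: "\<And>i j. fps_lap v i j = taylor_coeff f i j"
    and div_u: "\<And>n. u n 0 = 0" "\<And>n. homog_eval u n (of_real a) 1 = 0"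
    and div_v: "\<And>n. v n 0 = 0" "\<And>n. homog_eval v n (of_real a) 1 = 0"
    using assms(2,3) unfolding goursat_sol_def goursat_divisible_iff by auto
  have "w i j = 0" for i j
  proof (rule harmonic_goursat_kernel[OF _ _ _ nonresonant])
    show "fps_lap w i j = 0" for i j
      by (simp add: w_def fps_lap_diff lap_u lap_v)
    show "w n 0 = 0" for n
      by (simp add: w_def div_u div_v)
    show "homog_eval w n (of_real a) 1 = 0" for n
      by (simp add: w_def homog_eval_diff div_u div_v)
  qed
  then show ?thesis
    by (auto simp: w_def fun_eq_iff)
qed

section \<open>The formal solution\<close>

definition cayley :: "real \<Rightarrow> complex" where
  "cayley a = (of_real a + \<i>) / (of_real a - \<i>)"

lemma of_real_minus_imaginary_unit_nonzero: "of_real a - \<i> \<noteq> 0"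
  by (simp add: complex_eq_iff)

lemma cayley_power_minus_1:
  "cayley a ^ n - 1 = ((of_real a + \<i>) ^ n - (of_real a - \<i>) ^ n) / (of_real a - \<i>) ^ n"
  using of_real_minus_imaginary_unit_nonzero[of a]
  by (simp add: cayley_def power_divide field_simps)

lemma cayley_power_eq_1_iff:
  "cayley a ^ n = 1 \<longleftrightarrow> (of_real a + \<i>) ^ n = (of_real a - \<i>) ^ n"
  using cayley_power_minus_1[of a n] of_real_minus_imaginary_unit_nonzero[of a] by auto

definition particular_coeff :: "real \<Rightarrow> nat \<Rightarrow> complex" where
  "particular_coeff R m = 1 / (2 * of_nat (Suc m) * of_real R ^ m)"

definition harmonic_coeff :: "real \<Rightarrow> real \<Rightarrow> nat \<Rightarrow> complex" where
  "harmonic_coeff a R m =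
     - \<i> * particular_coeff R m / ((of_real a - \<i>) * (cayley a ^ (m + 2) - 1))"

text \<open>The coefficients of \<open>s (x - zbar) zbar\<^bsup>m+1\<^esup> + \<alpha> (z\<^bsup>m+2\<^esup> - zbar\<^bsup>m+2\<^esup>)\<close>, where \<open>s\<close> and \<open>\<alpha>\<close>
  are the two coefficients above: both terms vanish on \<open>y = 0\<close>, the Laplacian of the first is
  \<open>(zbar / R)\<^sup>m\<close>, and \<open>\<alpha>\<close> makes the sum vanish at \<open>(a, 1)\<close>.\<close>
definition solution_part :: "real \<Rightarrow> real \<Rightarrow> nat \<Rightarrow> nat \<Rightarrow> nat \<Rightarrow> complex" where
  "solution_part a R m i j =
     particular_coeff R m *
       (times_x (binom_coeffs (-\<i>) (Suc m)) i j - binom_coeffs (-\<i>) (m + 2) i j) +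
     harmonic_coeff a R m * (binom_coeffs \<i> (m + 2) i j - binom_coeffs (-\<i>) (m + 2) i j)"

definition goursat_solution :: "real \<Rightarrow> real \<Rightarrow> nat \<Rightarrow> nat \<Rightarrow> complex" where
  "goursat_solution a R i j = (if i + j < 2 then 0 else solution_part a R (i + j - 2) i j)"

lemma homog_eval_solution_part:
  "homog_eval (solution_part a R m) (m + 2) x y =
     particular_coeff R m * (x * (x - \<i> * y) ^ Suc m - (x - \<i> * y) ^ (m + 2)) +
     harmonic_coeff a R m * ((x + \<i> * y) ^ (m + 2) - (x - \<i> * y) ^ (m + 2))"
proof -
  have "homog_eval (times_x (binom_coeffs (-\<i>) (Suc m))) (m + 2) x y = x * (x - \<i> * y) ^ Suc m"
    using homog_eval_times_x[of _ "Suc m"] homog_eval_binom_coeffs by simp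
  then show ?thesis
    unfolding solution_part_def[abs_def]
    by (simp add: homog_eval_add homog_eval_diff homog_eval_cmult homog_eval_binom_coeffs)
qed

lemma homog_eval_goursat_solution:
  "homog_eval (goursat_solution a R) (m + 2) x y = homog_eval (solution_part a R m) (m + 2) x y"
  unfolding homog_eval_def by (intro sum.cong refl) (simp add: goursat_solution_def)

lemma homog_eval_goursat_solution_low_degree:
  "n < 2 \<Longrightarrow> homog_eval (goursat_solution a R) n x y = 0"
  by (simp add: homog_eval_def goursat_solution_def)

lemma goursat_solution_x_axis: "goursat_solution a R n 0 = 0"
proof (cases "n < 2")
  case False
  then obtain m where "n = m + 2"
    by (metis add.commute le_Suc_ex not_less)
  then show ?thesis
    by (simp add: goursat_solution_def solution_part_def times_x_def binom_coeffs_def)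
qed (simp add: goursat_solution_def)

lemma goursat_solution_vanishes_on_line:
  assumes nonresonant: "\<And>n. n \<ge> 2 \<Longrightarrow> cayley a ^ n \<noteq> 1"
  shows "homog_eval (goursat_solution a R) n (of_real a) 1 = 0"
proof (cases "n < 2")
  case True
  then show ?thesis by (rule homog_eval_goursat_solution_low_degree)
next
  case False
  then obtain m where n: "n = m + 2"
    by (metis add.commute le_Suc_ex not_less)
  define c where "c = of_real a - \<i>"
  define D where "D = cayley a ^ (m + 2) - 1"
  have "c \<noteq> 0"
    unfolding c_def by (rule of_real_minus_imaginary_unit_nonzero)
  have "D \<noteq> 0"
    using nonresonant[of "m + 2"] by (simp add: D_def)
  have "(of_real a + \<i>) ^ k - c ^ k = (cayley a ^ k - 1) * c ^ k" for k
    using \<open>c \<noteq> 0\<close> by (simp add: cayley_power_minus_1 c_def)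
  then have "(of_real a + \<i>) ^ (m + 2) - c ^ (m + 2) = D * c ^ (m + 2)"
    by (simp only: D_def)
  moreover have "harmonic_coeff a R m = - \<i> * particular_coeff R m / (c * D)"
    by (simp only: harmonic_coeff_def c_def D_def)
  ultimately have harmonic_term: "harmonic_coeff a R m * ((of_real a + \<i>) ^ (m + 2) - c ^ (m + 2)) =
      - (\<i> * particular_coeff R m * c ^ Suc m)"
    using \<open>c \<noteq> 0\<close> \<open>D \<noteq> 0\<close> by simp
  have particular_term: "of_real a * c ^ Suc m - c ^ (m + 2) = \<i> * c ^ Suc m"
    by (simp add: c_def algebra_simps)
  show ?thesis
    unfolding n homog_eval_goursat_solution homog_eval_solution_part mult_1_right c_def [symmetric]
    by (simp only: harmonic_term particular_term) simp
qed

lemma goursat_solution_at_isotropic: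
  "homog_eval (goursat_solution a R) (m + 2) 1 (-\<i>) = harmonic_coeff a R m * 2 ^ (m + 2)"
  unfolding homog_eval_goursat_solution homog_eval_solution_part by simp

lemma fps_lap_solution_part:
  "fps_lap (solution_part a R m) i j = binom_coeffs (-\<i>) m i j / of_real R ^ m"
proof -
  have "(of_nat (Suc m) :: complex) \<noteq> 0"
    by (rule of_nat_neq_0)
  then have scaled: "particular_coeff R m * (2 * of_nat (Suc m)) = 1 / of_real R ^ m"
    by (simp add: particular_coeff_def del: of_nat_Suc)
  have "fps_lap (solution_part a R m) i j =
      particular_coeff R m * (2 * of_nat (Suc m) * binom_coeffs (-\<i>) m i j)"
    unfolding solution_part_def[abs_def]
    by (simp add: fps_lap_add fps_lap_diff fps_lap_cmult fps_lap_binom_coeffs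
        fps_lap_times_x_binom_coeffs power2_eq_square del: of_nat_Suc)
  also have "\<dots> = binom_coeffs (-\<i>) m i j / of_real R ^ m"
    by (simp only: mult.assoc [of "particular_coeff R m" "2 * of_nat (Suc m)", symmetric] scaled) simp
  finally show ?thesis .
qed

lemma fps_lap_goursat_solution:
  "fps_lap (goursat_solution a R) i j = binom_coeffs (-\<i>) (i + j) i j / of_real R ^ (i + j)"
proof -
  have "fps_lap (goursat_solution a R) i j = fps_lap (solution_part a R (i + j)) i j"
    by (simp add: fps_lap_def goursat_solution_def)
  then show ?thesis
    by (simp add: fps_lap_solution_part)
qed

lemma goursat_sol_goursat_solution:
  assumes nonresonant: "\<And>n. n \<ge> 2 \<Longrightarrow> cayley a ^ n \<noteq> 1"
    and taylor: "\<And>i j. taylor_coeff f i j = binom_coeffs (-\<i>) (i + j) i j / of_real R ^ (i + j)"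
  shows "goursat_sol a f (goursat_solution a R)"
  unfolding goursat_sol_def goursat_divisible_iff
  using fps_lap_goursat_solution taylor goursat_solution_x_axis
    goursat_solution_vanishes_on_line[OF nonresonant]
  by simp

section \<open>Divergence of the formal solution\<close>

lemma mem_ball_origin_iff: "p \<in> ball (0, 0) r \<longleftrightarrow> norm p < r"
  unfolding zero_prod_def [symmetric] mem_ball_0 ..

lemma homog_eval_bounded_if_converges:
  assumes "fps2_converges_near0 u"
  obtains \<rho> M where "\<rho> > 0"
    "\<And>n (x :: complex) y. norm x \<le> \<rho> \<Longrightarrow> norm y \<le> \<rho> \<Longrightarrow> norm (homog_eval u n x y) \<le> M"
proof -
  obtain r where "r > 0" and summable: "\<And>p. p \<in> ball (0, 0) r \<Longrightarrow>
      (\<lambda>(i, j). u i j * of_real (fst p) ^ i * of_real (snd p) ^ j) summable_on UNIV"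
    using assms unfolding fps2_converges_near0_def by blast
  define \<rho> where "\<rho> = r / 3"
  have "\<rho> > 0"
    using \<open>r > 0\<close> by (simp add: \<rho>_def)
  have "norm (\<rho>, \<rho>) < r"
    using norm_Pair_le[of \<rho> \<rho>] \<open>r > 0\<close> by (simp add: \<rho>_def)
  then have "(\<rho>, \<rho>) \<in> ball (0, 0) r"
    unfolding mem_ball_origin_iff .
  define g where "g = (\<lambda>(i, j). u i j * of_real \<rho> ^ i * of_real \<rho> ^ j)"
  have "g summable_on UNIV"
    using summable[OF \<open>(\<rho>, \<rho>) \<in> ball (0, 0) r\<close>] by (simp add: g_def)
  then have abs_summable: "(\<lambda>p. norm (g p)) summable_on UNIV"
    using summable_on_iff_abs_summable_on_complex by blast
  show ?thesis
  proof
    show "\<rho> > 0" by fact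
    fix n and x y :: complex
    assume "norm x \<le> \<rho>" "norm y \<le> \<rho>"
    have "norm (homog_eval u n x y) \<le> (\<Sum>j\<le>n. norm (g (n - j, j)))"
      unfolding homog_eval_def
    proof (rule order_trans[OF norm_sum sum_mono])
      fix j
      show "norm (u (n - j) j * x ^ (n - j) * y ^ j) \<le> norm (g (n - j, j))"
        using \<open>norm x \<le> \<rho>\<close> \<open>norm y \<le> \<rho>\<close> \<open>\<rho> > 0\<close>
        by (auto simp: g_def norm_mult norm_power intro!: mult_mono power_mono)
    qed
    also have "\<dots> = sum (\<lambda>p. norm (g p)) ((\<lambda>j. (n - j, j)) ` {..n})"
      by (subst sum.reindex) (auto intro: inj_onI)
    also have "\<dots> \<le> (\<Sum>\<^sub>\<infinity>p. norm (g p))"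
      by (rule finite_sum_le_infsum[OF abs_summable]) auto
    finally show "norm (homog_eval u n x y) \<le> (\<Sum>\<^sub>\<infinity>p. norm (g p))" .
  qed
qed

lemma norm_harmonic_coeff:
  assumes "R > 0"
  shows "norm (harmonic_coeff a R m) =
    1 / (2 * real (Suc m) * R ^ m * norm (of_real a - \<i>) * norm (cayley a ^ (m + 2) - 1))"
proof -
  have "particular_coeff R m = of_real (1 / (2 * real (Suc m) * R ^ m))"
    by (simp add: particular_coeff_def)
  then have "norm (particular_coeff R m) = 1 / (2 * real (Suc m) * R ^ m)"
    using assms by (simp only: norm_of_real) simp
  then show ?thesis
    by (simp add: harmonic_coeff_def norm_mult norm_divide)
qed

lemma small_divisor_bound_at_isotropic:
  assumes "R > 0" "\<rho> > 0" "M \<ge> 0" "cayley a ^ (m + 2) \<noteq> 1"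
    and bound: "norm (homog_eval (goursat_solution a R) (m + 2) (of_real \<rho>) (- \<i> * of_real \<rho>)) \<le> M"
  shows "\<rho> ^ (m + 2) \<le> M * R ^ m * norm (of_real a - \<i>) * norm (cayley a ^ (m + 2) - 1)"
proof -
  define c where "c = norm (of_real a - \<i>)"
  define D where "D = norm (cayley a ^ (m + 2) - 1)"
  have "c > 0"
    using of_real_minus_imaginary_unit_nonzero by (simp add: c_def)
  have "D > 0"
    using assms(4) by (simp add: D_def)
  have "homog_eval (goursat_solution a R) (m + 2) (of_real \<rho>) (- \<i> * of_real \<rho>) =
      homog_eval (goursat_solution a R) (m + 2) (of_real \<rho> * 1) (of_real \<rho> * -\<i>)"
    by (simp add: mult.commute)
  also have "\<dots> = of_real \<rho> ^ (m + 2) * (harmonic_coeff a R m * 2 ^ (m + 2))"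
    unfolding homog_eval_scale goursat_solution_at_isotropic ..
  finally have "(2 * \<rho>) ^ (m + 2) * norm (harmonic_coeff a R m) \<le> M"
    using bound \<open>\<rho> > 0\<close> by (simp add: norm_mult norm_power power_mult_distrib mult_ac)
  then have "(2 * \<rho>) ^ (m + 2) \<le> M * (2 * real (Suc m) * R ^ m * c * D)"
    using \<open>c > 0\<close> \<open>D > 0\<close> \<open>R > 0\<close> by (simp add: norm_harmonic_coeff divide_le_eq c_def D_def)
  also have "\<dots> \<le> M * (2 ^ (m + 2) * R ^ m * c * D)"
  proof -
    have "Suc m \<le> 2 ^ Suc m"
      using less_exp[of "Suc m"] by (rule less_imp_le)
    then have "real (Suc m) \<le> 2 ^ Suc m"
      by (metis of_nat_le_iff of_nat_numeral of_nat_power)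
    then have "2 * real (Suc m) \<le> 2 ^ (m + 2)"
      by simp
    then show ?thesis
      using \<open>M \<ge> 0\<close> \<open>c > 0\<close> \<open>D > 0\<close> \<open>R > 0\<close> by (intro mult_left_mono mult_right_mono) auto
  qed
  finally show ?thesis
    by (simp add: power_mult_distrib c_def D_def mult_ac)
qed

lemma small_divisors_bounded_below:
  assumes "R > 0" and nonresonant: "\<And>n. n \<ge> 2 \<Longrightarrow> cayley a ^ n \<noteq> 1"
    and "fps2_converges_near0 (goursat_solution a R)"
  obtains C q where "C > 0" "q > 0" "\<And>n. n \<ge> 2 \<Longrightarrow> C * q ^ n \<le> norm (cayley a ^ n - 1)"
proof -
  obtain \<rho> M where "\<rho> > 0" and bound:
      "\<And>n x y. norm x \<le> \<rho> \<Longrightarrow> norm y \<le> \<rho> \<Longrightarrow> norm (homog_eval (goursat_solution a R) n x y) \<le> M"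
    using homog_eval_bounded_if_converges[OF assms(3)] by blast
  define c where "c = norm (of_real a - \<i>)"
  have "c > 0"
    using of_real_minus_imaginary_unit_nonzero by (simp add: c_def)
  have "norm (homog_eval (goursat_solution a R) 0 0 0) \<le> M"
    using bound[where x = 0 and y = 0 and n = 0] \<open>\<rho> > 0\<close> by simp
  then have "M \<ge> 0"
    by (rule order_trans[OF norm_ge_zero])
  have key: "\<rho> ^ (m + 2) \<le> M * R ^ m * c * norm (cayley a ^ (m + 2) - 1)" for m
    unfolding c_def using \<open>R > 0\<close> \<open>\<rho> > 0\<close> \<open>M \<ge> 0\<close> nonresonant[of "m + 2"]
    by (intro small_divisor_bound_at_isotropic bound) (auto simp: norm_mult)
  have "M \<noteq> 0"
  proof
    assume "M = 0"
    then have "\<rho> ^ (0 + 2) \<le> 0"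
      using key[of 0] by (simp only: mult_zero_left)
    then show False
      using zero_less_power[OF \<open>\<rho> > 0\<close>, of "0 + 2"] by linarith
  qed
  with \<open>M \<ge> 0\<close> have "M > 0"
    by simp
  show ?thesis
  proof
    show "R\<^sup>2 / (M * c) > 0" "\<rho> / R > 0"
      using \<open>M > 0\<close> \<open>c > 0\<close> \<open>R > 0\<close> \<open>\<rho> > 0\<close> by simp_all
    fix n :: nat
    assume "n \<ge> 2"
    then obtain m where n: "n = m + 2"
      by (metis add.commute le_Suc_ex)
    have "R\<^sup>2 / (M * c) * (\<rho> / R) ^ n = \<rho> ^ (m + 2) / (M * R ^ m * c)"
      using \<open>M > 0\<close> \<open>c > 0\<close> \<open>R > 0\<close>
      by (simp add: n power_divide power_add power2_eq_square)
    also have "\<dots> \<le> norm (cayley a ^ n - 1)"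
      using key[of m] \<open>M > 0\<close> \<open>c > 0\<close> \<open>R > 0\<close> by (simp add: divide_le_eq n mult_ac)
    finally show "R\<^sup>2 / (M * c) * (\<rho> / R) ^ n \<le> norm (cayley a ^ n - 1)" .
  qed
qed

lemma liminf_root_ge:
  fixes b :: "nat \<Rightarrow> real"
  assumes "C > 0" "q > 0" and bound: "\<And>n. n \<ge> N \<Longrightarrow> C * q ^ n \<le> b n"
  shows "ereal (min 1 C * q) \<le> liminf (\<lambda>n. ereal (b n powr (1 / real n)))"
proof (rule Liminf_bounded)
  define e where "e = min 1 C * q"
  have "e > 0"
    using assms by (simp add: e_def)
  show "\<forall>\<^sub>F n in sequentially. ereal e \<le> ereal (b n powr (1 / real n))"
    unfolding eventually_sequentially
  proof (intro exI allI impI)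
    fix n
    assume "max N 1 \<le> n"
    have "(min 1 C) ^ n \<le> C"
      using power_decreasing[of 1 n "min 1 C"] \<open>C > 0\<close> \<open>max N 1 \<le> n\<close> by simp
    then have "e ^ n \<le> C * q ^ n"
      using \<open>q > 0\<close> by (simp add: e_def power_mult_distrib mult_right_mono)
    also have "\<dots> \<le> b n"
      using bound \<open>max N 1 \<le> n\<close> by simp
    finally have "(e ^ n) powr (1 / real n) \<le> b n powr (1 / real n)"
      using \<open>e > 0\<close> by (intro powr_mono2) auto
    moreover have "(e ^ n) powr (1 / real n) = e"
      using \<open>e > 0\<close> \<open>max N 1 \<le> n\<close> by (simp add: powr_realpow [symmetric] powr_powr)
    ultimately show "ereal e \<le> ereal (b n powr (1 / real n))"
      by simp
  qed
qed

lemma goursat_solution_divergent: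
  assumes "R > 0" and nonresonant: "\<And>n. n \<ge> 2 \<Longrightarrow> cayley a ^ n \<noteq> 1"
    and "liminf (\<lambda>n. ereal (norm (cayley a ^ n - 1) powr (1 / real n))) = 0"
  shows "\<not> fps2_converges_near0 (goursat_solution a R)"
proof
  assume "fps2_converges_near0 (goursat_solution a R)"
  then obtain C q where "C > 0" "q > 0" "\<And>n. n \<ge> 2 \<Longrightarrow> C * q ^ n \<le> norm (cayley a ^ n - 1)"
    using small_divisors_bounded_below[OF \<open>R > 0\<close> nonresonant] by blast
  then have "ereal (min 1 C * q) \<le> liminf (\<lambda>n. ereal (norm (cayley a ^ n - 1) powr (1 / real n)))"
    by (rule liminf_root_ge)
  moreover have "min 1 C * q > 0"
    using \<open>C > 0\<close> \<open>q > 0\<close> by simp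
  ultimately show False
    using assms(3) by simp
qed

section \<open>The right-hand side \<open>\<Sum>\<^sub>m (zbar / R)\<^sup>m\<close>\<close>

definition zbar :: "real \<times> real \<Rightarrow> complex" where
  "zbar p = cnj (Complex (fst p) (snd p))"

lemma zbar_eq: "zbar p = of_real (fst p) - \<i> * of_real (snd p)"
  by (simp add: zbar_def complex_eq_iff)

lemma norm_zbar [simp]: "norm (zbar p) = norm p"
  by (cases p) (simp add: zbar_def norm_Pair complex_norm)

definition conj_geometric :: "real \<Rightarrow> real \<times> real \<Rightarrow> complex" where
  "conj_geometric R p = (\<Sum>m. (zbar p / of_real R) ^ m)"

definition zbar_pole :: "real \<Rightarrow> complex \<Rightarrow> nat \<Rightarrow> real \<times> real \<Rightarrow> complex" where
  "zbar_pole R c k p = c / (of_real R - zbar p) ^ Suc k"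

lemma zbar_pole_denom_nonzero:
  assumes "p \<in> ball (0, 0) R"
  shows "of_real R - zbar p \<noteq> 0"
proof
  assume "of_real R - zbar p = 0"
  then have "norm p = \<bar>R\<bar>"
    by (metis norm_of_real norm_zbar right_minus_eq)
  then show False
    using assms unfolding mem_ball_origin_iff by simp
qed

lemma conj_geometric_eq_zbar_pole:
  assumes "p \<in> ball (0, 0) R"
  shows "conj_geometric R p = zbar_pole R (of_real R) 0 p"
proof -
  have "norm p < R"
    using assms unfolding mem_ball_origin_iff .
  then have "R > 0"
    using norm_ge_zero order_le_less_trans by blast
  have "norm (zbar p / of_real R) < 1"
    using \<open>norm p < R\<close> \<open>R > 0\<close> by (simp add: norm_divide)
  then have "conj_geometric R p = 1 / (1 - zbar p / of_real R)"
    by (simp add: conj_geometric_def suminf_geometric)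
  also have "\<dots> = zbar_pole R (of_real R) 0 p"
    using \<open>R > 0\<close> by (simp add: zbar_pole_def field_simps)
  finally show ?thesis .
qed

lemma has_field_derivative_pole:
  fixes c d e w :: complex
  assumes "d + e * w \<noteq> 0"
  shows "((\<lambda>w. c / (d + e * w) ^ Suc k) has_field_derivative
    - c * e * of_nat (Suc k) / (d + e * w) ^ Suc (Suc k)) (at w)"
proof -
  define B where "B = d + e * w"
  have "((\<lambda>w. c / (d + e * w) ^ Suc k) has_field_derivative
      - (c * (of_nat (Suc k) * B ^ k * e)) / (B ^ Suc k * B ^ Suc k)) (at w)"
    unfolding B_def by (rule derivative_eq_intros refl | use assms in simp)+
  moreover have "B ^ Suc k * B ^ Suc k = B ^ k * B ^ Suc (Suc k)"
    by (simp flip: power_add)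
  then have "- (c * (of_nat (Suc k) * B ^ k * e)) / (B ^ Suc k * B ^ Suc k) =
      B ^ k * (- c * e * of_nat (Suc k)) / (B ^ k * B ^ Suc (Suc k))"
    by (simp only:) (simp add: ac_simps)
  also have "\<dots> = - c * e * of_nat (Suc k) / B ^ Suc (Suc k)"
    using assms by (rule_tac mult_divide_mult_cancel_left) (simp add: B_def)
  finally show ?thesis
    by (simp only: B_def)
qed

lemma vector_derivative_pole_on_line:
  fixes c d e :: complex
  assumes "open S" "t \<in> S" "d + e * of_real t \<noteq> 0"
    and g: "\<And>s. s \<in> S \<Longrightarrow> g s = c / (d + e * of_real s) ^ Suc k"
  shows "vector_derivative g (at t) = - c * e * of_nat (Suc k) / (d + e * of_real t) ^ Suc (Suc k)"
proof -
  have "((\<lambda>s. c / (d + e * of_real s) ^ Suc k) has_vector_derivative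
      - c * e * of_nat (Suc k) / (d + e * of_real t) ^ Suc (Suc k)) (at t)"
    using has_vector_derivative_real_field[OF has_field_derivative_pole[OF assms(3)]] by simp
  then have "(g has_vector_derivative
      - c * e * of_nat (Suc k) / (d + e * of_real t) ^ Suc (Suc k)) (at t)"
    by (rule has_vector_derivative_transform_within_open[OF _ assms(1,2)]) (simp add: g)
  then show ?thesis
    by (rule vector_derivative_at)
qed

lemma pdx_zbar_pole:
  assumes g: "\<And>q. q \<in> ball (0, 0) R \<Longrightarrow> g q = zbar_pole R c k q" and "p \<in> ball (0, 0) R"
  shows "pdx g p = zbar_pole R (c * of_nat (Suc k)) (Suc k) p"
proof -
  obtain x y where p: "p = (x, y)" by (cases p)
  define S where "S = (\<lambda>t :: real. (t, y)) -` ball (0, 0) R"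
  have line: "of_real R - zbar (t, y) = (of_real R + \<i> * of_real y) + (-1) * of_real t" for t
    by (simp add: zbar_eq)
  have "open S"
    unfolding S_def by (intro continuous_open_vimage open_ball continuous_intros)
  moreover have "x \<in> S"
    using assms(2) p by (simp add: S_def)
  moreover have "(of_real R + \<i> * of_real y) + (-1) * of_real x \<noteq> 0"
    using zbar_pole_denom_nonzero[OF assms(2)] p line by simp
  ultimately have "vector_derivative (\<lambda>t. g (t, y)) (at x) =
      - c * (-1) * of_nat (Suc k) / ((of_real R + \<i> * of_real y) + (-1) * of_real x) ^ Suc (Suc k)"
    by (rule vector_derivative_pole_on_line) (simp add: S_def g zbar_pole_def line)
  then show ?thesis
    by (simp add: pdx_def p zbar_pole_def line)
qed

lemma pdy_zbar_pole:
  assumes g: "\<And>q. q \<in> ball (0, 0) R \<Longrightarrow> g q = zbar_pole R c k q" and "p \<in> ball (0, 0) R"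
  shows "pdy g p = zbar_pole R (- \<i> * c * of_nat (Suc k)) (Suc k) p"
proof -
  obtain x y where p: "p = (x, y)" by (cases p)
  define S where "S = (\<lambda>t :: real. (x, t)) -` ball (0, 0) R"
  have line: "of_real R - zbar (x, t) = (of_real R - of_real x) + \<i> * of_real t" for t
    by (simp add: zbar_eq)
  have "open S"
    unfolding S_def by (intro continuous_open_vimage open_ball continuous_intros)
  moreover have "y \<in> S"
    using assms(2) p by (simp add: S_def)
  moreover have "(of_real R - of_real x) + \<i> * of_real y \<noteq> 0"
    using zbar_pole_denom_nonzero[OF assms(2)] p line by simp
  ultimately have "vector_derivative (\<lambda>t. g (x, t)) (at y) =
      - c * \<i> * of_nat (Suc k) / ((of_real R - of_real x) + \<i> * of_real y) ^ Suc (Suc k)"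
    by (rule vector_derivative_pole_on_line) (simp add: S_def g zbar_pole_def line)
  then show ?thesis
    by (simp add: pdy_def p zbar_pole_def line)
qed

lemma zbar_pole_differentiable:
  assumes "p \<in> ball (0, 0) R"
  shows "zbar_pole R c k differentiable (at p)"
proof -
  have linear_parts: "(\<lambda>q :: real \<times> real. complex_of_real (fst q)) differentiable at p"
    "(\<lambda>q :: real \<times> real. complex_of_real (snd q)) differentiable at p"
    by (auto intro!: bounded_linear_imp_differentiable bounded_linear_compose[OF bounded_linear_of_real]
        bounded_linear_fst bounded_linear_snd)
  have "zbar_pole R c k = (\<lambda>q. c / (of_real R - (of_real (fst q) - \<i> * of_real (snd q))) ^ Suc k)"
    by (simp add: fun_eq_iff zbar_pole_def zbar_eq)
  then show ?thesis
    using zbar_pole_denom_nonzero[OF assms] linear_parts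
    by (auto intro!: derivative_intros simp: zbar_eq)
qed

lemma partials_conj_geometric:
  assumes "g \<in> partials (conj_geometric R)"
  shows "\<exists>c k. \<forall>q\<in>ball (0, 0) R. g q = zbar_pole R c k q"
  using assms
proof (induction rule: partials.induct)
  case base
  then show ?case
    using conj_geometric_eq_zbar_pole by blast
next
  case (dx g)
  then obtain c k where "\<forall>q\<in>ball (0, 0) R. g q = zbar_pole R c k q"
    by blast
  then have "\<forall>q\<in>ball (0, 0) R. pdx g q = zbar_pole R (c * of_nat (Suc k)) (Suc k) q"
    using pdx_zbar_pole by blast
  then show ?case by blast
next
  case (dy g)
  then obtain c k where "\<forall>q\<in>ball (0, 0) R. g q = zbar_pole R c k q"
    by blast
  then have "\<forall>q\<in>ball (0, 0) R. pdy g q = zbar_pole R (- \<i> * c * of_nat (Suc k)) (Suc k) q"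
    using pdy_zbar_pole by blast
  then show ?case by blast
qed

lemma smooth_on_conj_geometric: "smooth_on (ball (0, 0) R) (conj_geometric R)"
  unfolding smooth_on_def
proof
  fix g
  assume "g \<in> partials (conj_geometric R)"
  then obtain c k where g: "\<forall>q\<in>ball (0, 0) R. g q = zbar_pole R c k q"
    using partials_conj_geometric by blast
  show "g differentiable_on ball (0, 0) R"
  proof (rule differentiable_at_imp_differentiable_on)
    fix p :: "real \<times> real"
    assume p: "p \<in> ball (0, 0) R"
    then obtain D where "(zbar_pole R c k has_derivative D) (at p)"
      using zbar_pole_differentiable unfolding differentiable_def by blast
    then have "(g has_derivative D) (at p)"
      by (rule has_derivative_transform_within_open[OF _ open_ball p]) (use g in simp)
    then show "g differentiable at p"
      unfolding differentiable_def by blast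
  qed
qed

lemma pdy_iterate_conj_geometric:
  "q \<in> ball (0, 0) R \<Longrightarrow>
    (pdy ^^ j) (conj_geometric R) q = zbar_pole R (of_real R * fact j * (-\<i>) ^ j) j q"
proof (induction j arbitrary: q)
  case 0
  then show ?case
    by (simp add: conj_geometric_eq_zbar_pole)
next
  case (Suc j)
  have "(pdy ^^ Suc j) (conj_geometric R) q = pdy ((pdy ^^ j) (conj_geometric R)) q"
    by simp
  also have "\<dots> = zbar_pole R (- \<i> * (of_real R * fact j * (-\<i>) ^ j) * of_nat (Suc j)) (Suc j) q"
    by (rule pdy_zbar_pole[OF Suc.IH Suc.prems])
  also have "- \<i> * (of_real R * fact j * (-\<i>) ^ j) * of_nat (Suc j) =
      (of_real R * fact (Suc j) * (-\<i>) ^ Suc j :: complex)"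
    by (simp add: algebra_simps)
  finally show ?case .
qed

lemma pdx_iterate_zbar_pole:
  assumes "\<And>q. q \<in> ball (0, 0) R \<Longrightarrow> g q = zbar_pole R c k q"
  shows "q \<in> ball (0, 0) R \<Longrightarrow> (pdx ^^ i) g q = zbar_pole R (c * fact (k + i) / fact k) (k + i) q"
proof (induction i arbitrary: q)
  case 0
  then show ?case
    using assms by simp
next
  case (Suc i)
  have "(pdx ^^ Suc i) g q = pdx ((pdx ^^ i) g) q"
    by simp
  also have "\<dots> = zbar_pole R (c * fact (k + i) / fact k * of_nat (Suc (k + i))) (Suc (k + i)) q"
    by (rule pdx_zbar_pole[OF Suc.IH Suc.prems])
  also have "c * fact (k + i) / fact k * of_nat (Suc (k + i)) = (c * fact (k + Suc i) / fact k :: complex)"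
    by (simp add: algebra_simps)
  finally show ?case
    by simp
qed

lemma taylor_coeff_conj_geometric:
  assumes "R > 0"
  shows "taylor_coeff (conj_geometric R) i j = binom_coeffs (-\<i>) (i + j) i j / of_real R ^ (i + j)"
proof -
  have "(0, 0) \<in> ball (0 :: real, 0 :: real) R"
    using assms by simp
  then have "((pdx ^^ i) ((pdy ^^ j) (conj_geometric R))) (0, 0) =
      zbar_pole R (of_real R * fact j * (-\<i>) ^ j * fact (j + i) / fact j) (j + i) (0, 0)"
    using pdx_iterate_zbar_pole[OF pdy_iterate_conj_geometric] by blast
  also have "\<dots> = fact (i + j) * (-\<i>) ^ j / of_real R ^ (i + j)"
    using assms by (simp add: zbar_pole_def zbar_eq add.commute)
  finally show ?thesis
    using assms
    by (simp add: taylor_coeff_def binom_coeffs_def binomial_fact field_simps)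
qed

lemma taylor_hom_eq_homog_eval:
  "taylor_hom f m p = homog_eval (taylor_coeff f) m (of_real (fst p)) (of_real (snd p))"
proof -
  have "taylor_hom f m p = (\<Sum>i=0..m. taylor_coeff f (m - i) (m - (m - i)) *
      of_real (fst p) ^ (m - i) * of_real (snd p) ^ (m - (m - i)))"
    unfolding taylor_hom_def atLeast0AtMost [symmetric]
    by (subst sum.atLeastAtMost_rev) simp
  also have "\<dots> = homog_eval (taylor_coeff f) m (of_real (fst p)) (of_real (snd p))"
    unfolding homog_eval_def atLeast0AtMost by (intro sum.cong refl) simp
  finally show ?thesis .
qed

lemma taylor_hom_conj_geometric:
  assumes "R > 0"
  shows "taylor_hom (conj_geometric R) m p = (zbar p / of_real R) ^ m"
proof -
  have "taylor_hom (conj_geometric R) m p =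
      homog_eval (\<lambda>i j. 1 / of_real R ^ m * binom_coeffs (-\<i>) m i j) m (of_real (fst p)) (of_real (snd p))"
    unfolding taylor_hom_eq_homog_eval homog_eval_def taylor_coeff_conj_geometric[OF assms]
    by (intro sum.cong refl) simp
  also have "\<dots> = 1 / of_real R ^ m * (of_real (fst p) + - \<i> * of_real (snd p)) ^ m"
    by (simp only: homog_eval_cmult homog_eval_binom_coeffs)
  also have "\<dots> = (zbar p / of_real R) ^ m"
    by (simp add: zbar_eq power_divide)
  finally show ?thesis .
qed

lemma conj_geometric_in_algA:
  assumes "R > 0"
  shows "conj_geometric R \<in> algA R"
  unfolding algA_def
proof (intro CollectI conjI allI impI smooth_on_conj_geometric)
  fix K :: "(real \<times> real) set"
  assume K: "compact K \<and> K \<subseteq> ball (0, 0) R"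
  obtain r where "0 \<le> r" "r < R" and r: "\<And>p. p \<in> K \<Longrightarrow> norm p \<le> r"
  proof (cases "K = {}")
    case True
    then show ?thesis
      using that[of 0] assms by auto
  next
    case False
    have "continuous_on K norm"
      by (intro continuous_intros)
    then obtain x where "x \<in> K" "\<And>y. y \<in> K \<Longrightarrow> norm y \<le> norm x"
      using continuous_attains_sup[of K norm] K False by blast
    moreover have "norm x < R"
      using \<open>x \<in> K\<close> K mem_ball_origin_iff by blast
    ultimately show ?thesis
      using that[of "norm x"] by simp
  qed
  have bound: "norm (taylor_hom (conj_geometric R) m p) \<le> (r / R) ^ m" if "p \<in> K" for m p
    using r[OF that] assms
    by (simp add: taylor_hom_conj_geometric norm_power norm_divide power_mono divide_right_mono)
  have summable: "summable (\<lambda>m. (r / R) ^ m)"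
    using \<open>0 \<le> r\<close> \<open>r < R\<close> by (intro summable_geometric) simp
  show "uniformly_convergent_on K (\<lambda>n p. \<Sum>m<n. norm (taylor_hom (conj_geometric R) m p))"
    by (rule Weierstrass_m_test'[OF _ summable]) (use bound in simp)
  have "uniform_limit K (\<lambda>n p. \<Sum>m<n. taylor_hom (conj_geometric R) m p)
      (\<lambda>p. \<Sum>m. taylor_hom (conj_geometric R) m p) sequentially"
    by (rule Weierstrass_m_test[OF _ summable]) (use bound in simp)
  moreover have "(\<lambda>p. \<Sum>m. taylor_hom (conj_geometric R) m p) = conj_geometric R"
    using assms by (simp add: fun_eq_iff taylor_hom_conj_geometric conj_geometric_def)
  ultimately show "uniform_limit K (\<lambda>n p. \<Sum>m<n. taylor_hom (conj_geometric R) m p)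
      (conj_geometric R) sequentially"
    by simp
qed

theorem mainTheorem10:
  fixes a R :: real and A :: complex
  assumes "a \<ge> 0"
    and "A = (of_real a + \<i>) / (of_real a - \<i>)"
    and "\<forall>n::nat. n > 0 \<longrightarrow> A ^ n \<noteq> 1"
    and "liminf (\<lambda>m::nat. ereal (norm (A ^ m - 1) powr (1 / real m))) = 0"
    and "0 < R"
  defines "f \<equiv> (\<lambda>p::real \<times> real. \<Sum>m. (cnj (Complex (fst p) (snd p)) / of_real R) ^ m)"
  shows "f \<in> algA R \<and> (\<exists>u. goursat_sol a f u) \<and>
         (\<forall>u. goursat_sol a f u \<longrightarrow> \<not> fps2_converges_near0 u)"
proof -
  have f_eq: "f = conj_geometric R"
    by (simp add: f_def conj_geometric_def zbar_def fun_eq_iff)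
  have A: "A = cayley a"
    by (simp add: assms(2) cayley_def)
  have nonresonant: "(of_real a + \<i>) ^ n \<noteq> (of_real a - \<i>) ^ n" if "n > 0" for n
    using assms(3) that by (simp add: A flip: cayley_power_eq_1_iff)
  have nonresonant': "cayley a ^ n \<noteq> 1" if "n \<ge> 2" for n
    using assms(3) that by (simp add: A)
  have solution: "goursat_sol a f (goursat_solution a R)"
    unfolding f_eq
    by (intro goursat_sol_goursat_solution nonresonant' taylor_coeff_conj_geometric \<open>R > 0\<close>)
  have "\<not> fps2_converges_near0 (goursat_solution a R)"
    using goursat_solution_divergent[OF \<open>R > 0\<close> nonresonant'] assms(4) by (simp add: A)
  then have "\<not> fps2_converges_near0 u" if "goursat_sol a f u" for u
    using goursat_sol_unique[OF nonresonant that solution] by simp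
  then show ?thesis
    using conj_geometric_in_algA[OF \<open>R > 0\<close>] solution f_eq by blast
qed

end
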